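(* Let $K\in\{\mathbb R,\mathbb C,\mathbb H\}$ and let $(E,d)$ be a metric vector space over $K$ such that $d$ is $C_0$-translation invariant and $(C_1,C_2,C_3)$-lipschitz multiplicative. Define $d_0(x,y)=\int_{\mathbb U}d(ux,uy)\,d\mu(u)$. Then $d_0$ is a distance on $E$ which is $(C_1,C_2+C_3)$-lipschitz equivalent to $d$, is $C_0$-translation invariant and is $(C_1,C_2,C_3)$-lipschitz multiplicative. Moreover $d$ and $d_0$ define the same topology on $E$.
   Context: $K$ has its usual absolute value. A metric vector space is a topological vector space over $K$ whose topology is generated by the metric $d$. $\mathbb U=\{u\in K:|u|=1\}$, $\mu$ the right-invariant Haar probability measure on $\mathbb U$. $d$ is $C_0$-translation invariant if $d(x+z,y+z)\le d(x,y)+C_0$ for all $x,y,z$. For $C_1\ge1$, $C_2,C_3\ge0$, $d$ is $(C_1,C_2,C_3)$-lipschitz multiplicative if $C_1^{-1}|\lambda|d(x,y)-C_2|\lambda|-C_3\le d(\lambda x,\lambda y)\le C_1|\lambda|d(x,y)+C_2|\lambda|+C_3$ for all $\lambda\in K$, $x,y\in E$. A distance $\rho$ is $(A,B)$-lipschitz equivalent to $\sigma$ if $A^{-1}\sigma(x,y)-B\le\rho(x,y)\le A\sigma(x,y)+B$ for all $x,y$. *)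

theory Defs
  imports "HOL-Analysis.Analysis" "HOL-Probability.Probability"
begin

text \<open>The scalar field K is a real normed division algebra (R, C or H);
  |.| is its norm.  E is an abelian group with a (left) scalar action sc of K
  making it a vector space over K.\<close>

definition left_vector_space :: "('k::real_normed_div_algebra \<Rightarrow> 'e::ab_group_add \<Rightarrow> 'e) \<Rightarrow> bool" where
  "left_vector_space sc \<longleftrightarrow>
     (\<forall>a x y. sc a (x + y) = sc a x + sc a y) \<and>
     (\<forall>a b x. sc (a + b) x = sc a x + sc b x) \<and>
     (\<forall>a b x. sc (a * b) x = sc a (sc b x)) \<and>
     (\<forall>x. sc 1 x = x)"

definition metric_vector_space ::
  "('k::real_normed_div_algebra \<Rightarrow> 'e::ab_group_add \<Rightarrow> 'e) \<Rightarrow> ('e \<Rightarrow> 'e \<Rightarrow> real) \<Rightarrow> bool" where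
  "metric_vector_space sc d \<longleftrightarrow>
     left_vector_space sc \<and> Metric_space UNIV d \<and>
     continuous_map (prod_topology (Metric_space.mtopology UNIV d) (Metric_space.mtopology UNIV d))
        (Metric_space.mtopology UNIV d) (\<lambda>(x, y). x + y) \<and>
     continuous_map (prod_topology (euclidean :: 'k topology) (Metric_space.mtopology UNIV d))
        (Metric_space.mtopology UNIV d) (\<lambda>(a, x). sc a x)"

definition translation_invariant :: "real \<Rightarrow> ('e::plus \<Rightarrow> 'e \<Rightarrow> real) \<Rightarrow> bool" where
  "translation_invariant C0 d \<longleftrightarrow> (\<forall>x y z. d (x + z) (y + z) \<le> d x y + C0)"

definition lipschitz_multiplicative ::
  "real \<Rightarrow> real \<Rightarrow> real \<Rightarrow> ('k::real_normed_div_algebra \<Rightarrow> 'e \<Rightarrow> 'e) \<Rightarrow> ('e \<Rightarrow> 'e \<Rightarrow> real) \<Rightarrow> bool" where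
  "lipschitz_multiplicative C1 C2 C3 sc d \<longleftrightarrow>
     (\<forall>c x y. inverse C1 * norm c * d x y - C2 * norm c - C3 \<le> d (sc c x) (sc c y) \<and>
              d (sc c x) (sc c y) \<le> C1 * norm c * d x y + C2 * norm c + C3)"

definition lipschitz_equivalent :: "real \<Rightarrow> real \<Rightarrow> ('e \<Rightarrow> 'e \<Rightarrow> real) \<Rightarrow> ('e \<Rightarrow> 'e \<Rightarrow> real) \<Rightarrow> bool" where
  "lipschitz_equivalent A B \<rho> \<sigma> \<longleftrightarrow>
     (\<forall>x y. inverse A * \<sigma> x y - B \<le> \<rho> x y \<and> \<rho> x y \<le> A * \<sigma> x y + B)"

definition unit_sphere :: "'k::real_normed_div_algebra set" where
  "unit_sphere = {u. norm u = 1}"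

definition right_haar_prob :: "'k::real_normed_div_algebra measure \<Rightarrow> bool" where
  "right_haar_prob M \<longleftrightarrow>
     prob_space M \<and> space M = unit_sphere \<and> sets M = sets (restrict_space borel unit_sphere) \<and>
     (\<forall>v\<in>unit_sphere. distr M M (\<lambda>u. u * v) = M)"

definition averaged_dist ::
  "'k::real_normed_div_algebra measure \<Rightarrow> ('k \<Rightarrow> 'e \<Rightarrow> 'e) \<Rightarrow> ('e \<Rightarrow> 'e \<Rightarrow> real) \<Rightarrow> 'e \<Rightarrow> 'e \<Rightarrow> real" where
  "averaged_dist M sc d x y = (\<integral>u. d (sc u x) (sc u y) \<partial>M)"

end

theory Submission
  imports Defs
begin

text \<open>Averaging over the unit sphere keeps every pointwise estimate that holds for each
  rotated distance d(ux, uy), |u| = 1: those follow from the hypotheses on d with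
  \<lambda> = u.  Multiplicativity is obtained by writing \<lambda> = |\<lambda>| v with |v| = 1 and absorbing v into
  the integration variable by right invariance of \<mu>.  For the topologies: if d(x, y_n) \<rightarrow> 0
  then d(ux, uy_n) \<rightarrow> 0 for every u and dominated convergence gives d_0(x, y_n) \<rightarrow> 0;
  conversely if d_0(x, y_n) \<rightarrow> 0, a subsequence satisfies d(ux, uy_n) \<rightarrow> 0 for some u, and
  continuity of the multiplication by the inverse of u brings it back to d(x, y_n) \<rightarrow> 0.\<close>

lemma left_vector_space_scale_inverse:
  assumes "left_vector_space sc" and "c \<noteq> 0"
  shows "sc (inverse c) (sc c x) = x"
  using assms unfolding left_vector_space_def by (metis left_inverse)

lemma metric_vector_space_continuous_map_scale:
  assumes "metric_vector_space sc d"
  shows "continuous_map (Metric_space.mtopology UNIV d) (Metric_space.mtopology UNIV d) (sc c)"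
proof -
  interpret Metric_space UNIV d
    using assms by (simp add: metric_vector_space_def)
  have "continuous_map mtopology (prod_topology euclidean mtopology) (\<lambda>x. (c, x))"
    by (intro continuous_map_pairedI) auto
  with assms show ?thesis
    by (auto simp: metric_vector_space_def o_def dest: continuous_map_compose)
qed

lemma metric_vector_space_continuous_map_scale_vector:
  assumes "metric_vector_space sc d"
  shows "continuous_map euclidean (Metric_space.mtopology UNIV d) (\<lambda>c. sc c x)"
proof -
  interpret Metric_space UNIV d
    using assms by (simp add: metric_vector_space_def)
  have "continuous_map euclidean (prod_topology euclidean mtopology) (\<lambda>c. (c, x))"
    by (intro continuous_map_pairedI) auto
  with assms show ?thesis
    by (auto simp: metric_vector_space_def o_def dest: continuous_map_compose)
qed

lemma metric_vector_space_continuous_on_dist_scale: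
  assumes "metric_vector_space sc d"
  shows "continuous_on UNIV (\<lambda>c. d (sc c x) (sc c y))"
proof -
  interpret Metric_space UNIV d
    using assms by (simp add: metric_vector_space_def)
  have "continuous_map euclidean euclidean (\<lambda>c. mdist (metric (UNIV, d)) (sc c x) (sc c y))"
    by (intro continuous_map_mdist)
      (simp_all add: metric_vector_space_continuous_map_scale_vector[OF assms])
  then show ?thesis
    by (simp add: continuous_map_iff_continuous2)
qed

lemma Metric_space_pullback:
  assumes "Metric_space UNIV d" and "inj f"
  shows "Metric_space UNIV (\<lambda>x y. d (f x) (f y))"
proof -
  interpret Metric_space UNIV d by fact
  show ?thesis
    by unfold_locales (auto simp: commute triangle inj_eq[OF \<open>inj f\<close>])
qed

lemma exists_unit_sphere_factor:
  fixes c :: "'k::real_normed_div_algebra"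
  obtains v where "v \<in> unit_sphere" and "c = of_real (norm c) * v"
proof (cases "c = 0")
  case True
  then show ?thesis
    by (intro that[of 1]) (simp_all add: unit_sphere_def)
next
  case False
  then show ?thesis
    by (intro that[of "of_real (inverse (norm c)) * c"])
      (simp_all add: unit_sphere_def norm_mult norm_inverse flip: mult.assoc of_real_mult)
qed

lemma (in prob_space) AE_imp_ex:
  assumes "AE x in M. P x"
  shows "\<exists>x\<in>space M. P x"
  using assms AE_contr[of P] AE_I2[of M "\<lambda>x. \<not> P x"] by blast

lemma (in prob_space) integral_affine:
  fixes f :: "'a \<Rightarrow> real"
  assumes "integrable M f"
  shows "(\<integral>x. a * f x + b \<partial>M) = a * integral\<^sup>L M f + b"
  using assms by (simp add: prob_space)

lemma Metric_space_integral:
  fixes D :: "'a \<Rightarrow> 'b \<Rightarrow> 'b \<Rightarrow> real"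
  assumes "prob_space M"
    and metric: "\<And>u. u \<in> space M \<Longrightarrow> Metric_space UNIV (D u)"
    and integrable: "\<And>x y. integrable M (\<lambda>u. D u x y)"
  shows "Metric_space UNIV (\<lambda>x y. \<integral>u. D u x y \<partial>M)"
proof
  interpret prob_space M by fact
  fix x y z
  have nonneg: "AE u in M. 0 \<le> D u x y"
    by (intro AE_I2) (rule Metric_space.nonneg[OF metric])
  then show "0 \<le> (\<integral>u. D u x y \<partial>M)"
    by (rule integral_nonneg_AE)
  show "(\<integral>u. D u x y \<partial>M) = (\<integral>u. D u y x \<partial>M)"
    by (rule Bochner_Integration.integral_cong) (simp_all add: Metric_space.commute[OF metric])
  have "(\<integral>u. D u x z \<partial>M) \<le> (\<integral>u. D u x y + D u y z \<partial>M)"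
    by (intro integral_mono Bochner_Integration.integrable_add integrable)
      (simp add: Metric_space.triangle[OF metric])
  also have "\<dots> = (\<integral>u. D u x y \<partial>M) + (\<integral>u. D u y z \<partial>M)"
    by (intro Bochner_Integration.integral_add integrable)
  finally show "(\<integral>u. D u x z \<partial>M) \<le> (\<integral>u. D u x y \<partial>M) + (\<integral>u. D u y z \<partial>M)" .
  show "(\<integral>u. D u x y \<partial>M) = 0 \<longleftrightarrow> x = y"
  proof
    assume "(\<integral>u. D u x y \<partial>M) = 0"
    then have "AE u in M. D u x y = 0"
      using integral_nonneg_eq_0_iff_AE[OF integrable nonneg] by simp
    then obtain u where "u \<in> space M" and "D u x y = 0"
      by (blast dest: AE_imp_ex)
    then show "x = y"
      using Metric_space.zero[OF metric] by blast
  next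
    assume "x = y"
    then have "(\<integral>u. D u x y \<partial>M) = (\<integral>u. 0 \<partial>M)"
      by (intro Bochner_Integration.integral_cong) (simp_all add: Metric_space.zero[OF metric])
    then show "(\<integral>u. D u x y \<partial>M) = 0"
      by simp
  qed
qed

lemma right_haar_prob_measurable_mult_right:
  assumes "right_haar_prob M" and "v \<in> unit_sphere"
  shows "(\<lambda>u. u * v) \<in> M \<rightarrow>\<^sub>M M"
proof -
  have sets: "sets M = sets (restrict_space borel unit_sphere)"
    using assms(1) by (simp add: right_haar_prob_def)
  have "(\<lambda>u. u * v) \<in> borel \<rightarrow>\<^sub>M borel"
    by (intro borel_measurable_continuous_onI continuous_intros)
  then have "(\<lambda>u. u * v) \<in> restrict_space borel unit_sphere \<rightarrow>\<^sub>M restrict_space borel unit_sphere"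
    by (rule measurable_restrict_space3) (use assms(2) in \<open>auto simp: unit_sphere_def norm_mult\<close>)
  then show ?thesis
    by (simp add: measurable_cong_sets[OF sets sets])
qed

lemma right_haar_prob_integral_mult_right:
  fixes f :: "'k::real_normed_div_algebra \<Rightarrow> real"
  assumes "right_haar_prob M" and "v \<in> unit_sphere" and "f \<in> borel_measurable M"
  shows "integrable M (\<lambda>u. f (u * v)) \<longleftrightarrow> integrable M f"
    and "(\<integral>u. f (u * v) \<partial>M) = integral\<^sup>L M f"
proof -
  have "distr M M (\<lambda>u. u * v) = M"
    using assms(1,2) by (simp add: right_haar_prob_def)
  with integrable_distr_eq[OF right_haar_prob_measurable_mult_right[OF assms(1,2)] assms(3)]
    integral_distr[OF right_haar_prob_measurable_mult_right[OF assms(1,2)] assms(3)]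
  show "integrable M (\<lambda>u. f (u * v)) \<longleftrightarrow> integrable M f"
    and "(\<integral>u. f (u * v) \<partial>M) = integral\<^sup>L M f"
    by simp_all
qed

lemma continuous_map_id_mtopology_if_null_subseq:
  assumes "Metric_space UNIV d1" and "Metric_space UNIV d2"
    and subseq: "\<And>x Y. (\<lambda>n. d1 x (Y n)) \<longlonglongrightarrow> 0 \<Longrightarrow>
      \<exists>r. strict_mono r \<and> (\<lambda>n. d2 x (Y (r n))) \<longlonglongrightarrow> 0"
  shows "continuous_map (Metric_space.mtopology UNIV d1) (Metric_space.mtopology UNIV d2) id"
proof -
  interpret M1: Metric_space UNIV d1 by fact
  have "\<exists>\<delta>>0. \<forall>y. d1 x y < \<delta> \<longrightarrow> d2 x y < e" if "e > 0" for x e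
  proof (rule ccontr)
    assume "\<not> ?thesis"
    then have "\<exists>y. d1 x y < 1 / real (Suc n) \<and> e \<le> d2 x y" for n
      by (meson not_less of_nat_0_less_iff zero_less_Suc zero_less_divide_1_iff)
    then obtain Y where close: "\<And>n. d1 x (Y n) < 1 / real (Suc n)"
      and far: "\<And>n. e \<le> d2 x (Y n)"
      by metis
    have "norm (d1 x (Y n)) < 1 / real (Suc n)" for n
      using close[of n] by simp
    then have "(\<lambda>n. d1 x (Y n)) \<longlonglongrightarrow> 0"
      by (rule LIMSEQ_norm_0)
    then obtain r where "(\<lambda>n. d2 x (Y (r n))) \<longlonglongrightarrow> 0"
      using subseq by blast
    from order_tendstoD(2)[OF this \<open>e > 0\<close>] obtain n where "d2 x (Y (r n)) < e"
      by (auto simp: eventually_sequentially)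
    with far[of "r n"] show False
      by linarith
  qed
  then show ?thesis
    by (auto simp: M1.metric_continuous_map[OF assms(2)])
qed

locale sphere_averaging =
  fixes sc :: "'k::real_normed_div_algebra \<Rightarrow> 'e::ab_group_add \<Rightarrow> 'e"
    and d :: "'e \<Rightarrow> 'e \<Rightarrow> real"
    and M :: "'k measure"
    and C1 C2 C3 :: real
  assumes metric_vector_space: "metric_vector_space sc d"
    and right_haar_prob: "right_haar_prob M"
    and lipschitz_multiplicative: "lipschitz_multiplicative C1 C2 C3 sc d"
begin

abbreviation d\<^sub>0 :: "'e \<Rightarrow> 'e \<Rightarrow> real" where
  "d\<^sub>0 \<equiv> averaged_dist M sc d"

sublocale D: Metric_space UNIV d
  using metric_vector_space by (simp add: metric_vector_space_def)

sublocale prob_space M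
  using right_haar_prob by (simp add: right_haar_prob_def)

lemma left_vector_space: "left_vector_space sc"
  using metric_vector_space by (simp add: metric_vector_space_def)

lemma norm_eq_1: "u \<in> space M \<Longrightarrow> norm u = 1"
  using right_haar_prob by (simp add: right_haar_prob_def unit_sphere_def)

lemma space_nonzero: "u \<in> space M \<Longrightarrow> u \<noteq> 0"
  using norm_eq_1 by force

lemma borel_measurable_dist_scale: "(\<lambda>u. d (sc u x) (sc u y)) \<in> borel_measurable M"
proof -
  have sets: "sets M = sets (restrict_space borel unit_sphere)"
    using right_haar_prob by (simp add: right_haar_prob_def)
  show ?thesis
    unfolding measurable_cong_sets[OF sets refl]
    by (intro measurable_restrict_space1 borel_measurable_continuous_onI
        metric_vector_space_continuous_on_dist_scale[OF metric_vector_space])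
qed

lemma dist_scale_bounds:
  assumes "u \<in> space M"
  shows "inverse C1 * d x y - (C2 + C3) \<le> d (sc u x) (sc u y)"
    and "d (sc u x) (sc u y) \<le> C1 * d x y + (C2 + C3)"
  using lipschitz_multiplicative[unfolded lipschitz_multiplicative_def, rule_format, of u x y]
  by (simp_all add: norm_eq_1[OF assms] algebra_simps)

lemma integrable_dist_scale: "integrable M (\<lambda>u. d (sc u x) (sc u y))"
  by (rule integrable_const_bound[where B = "C1 * d x y + (C2 + C3)"])
    (simp_all add: AE_I2 dist_scale_bounds borel_measurable_dist_scale)

lemma averaged_dist_eq: "d\<^sub>0 x y = (\<integral>u. d (sc u x) (sc u y) \<partial>M)"
  by (simp add: averaged_dist_def)

lemma Metric_space_averaged_dist: "Metric_space UNIV d\<^sub>0"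
proof -
  have "inj (sc u)" if "u \<in> space M" for u
    using left_vector_space_scale_inverse[OF left_vector_space space_nonzero[OF that]]
    by (rule inj_on_inverseI)
  then show ?thesis
    unfolding averaged_dist_def
    by (intro Metric_space_integral[OF prob_space_axioms _ integrable_dist_scale]
        Metric_space_pullback[OF D.Metric_space_axioms])
qed

lemma lipschitz_equivalent_averaged_dist: "lipschitz_equivalent C1 (C2 + C3) d\<^sub>0 d"
  unfolding lipschitz_equivalent_def averaged_dist_eq
  by (simp add: integral_ge_const integral_le_const integrable_dist_scale AE_I2 dist_scale_bounds)

lemma translation_invariant_averaged_dist:
  assumes "translation_invariant C0 d"
  shows "translation_invariant C0 d\<^sub>0"
  unfolding translation_invariant_def
proof (intro allI)
  fix x y z
  have "d\<^sub>0 (x + z) (y + z) \<le> (\<integral>u. 1 * d (sc u x) (sc u y) + C0 \<partial>M)"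
    unfolding averaged_dist_eq
    using assms left_vector_space
    by (intro integral_mono integrable_dist_scale)
      (simp_all add: translation_invariant_def left_vector_space_def integrable_dist_scale)
  then show "d\<^sub>0 (x + z) (y + z) \<le> d\<^sub>0 x y + C0"
    by (simp add: integrable_dist_scale averaged_dist_eq prob_space)
qed

lemma lipschitz_multiplicative_averaged_dist: "lipschitz_multiplicative C1 C2 C3 sc d\<^sub>0"
  unfolding lipschitz_multiplicative_def
proof (intro allI conjI)
  fix c :: 'k and x y :: 'e
  obtain v where v: "v \<in> unit_sphere" and c: "c = of_real (norm c) * v"
    using exists_unit_sphere_factor .
  define g where "g w = d (sc w x) (sc w y)" for w
  have g_mult_right: "integrable M (\<lambda>u. g (u * v))" "(\<integral>u. g (u * v) \<partial>M) = d\<^sub>0 x y"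
    using right_haar_prob_integral_mult_right[OF right_haar_prob v borel_measurable_dist_scale]
    by (simp_all add: g_def integrable_dist_scale averaged_dist_eq)
  have "u * c = of_real (norm c) * (u * v)" for u
    by (subst c) (simp add: of_real_def)
  then have "sc u (sc c z) = sc (of_real (norm c)) (sc (u * v) z)" for u z
    using left_vector_space unfolding left_vector_space_def by metis
  then have scale: "d (sc u (sc c x)) (sc u (sc c y))
      = d (sc (of_real (norm c)) (sc (u * v) x)) (sc (of_real (norm c)) (sc (u * v) y))" for u
    by simp
  note bounds = lipschitz_multiplicative[unfolded lipschitz_multiplicative_def, rule_format,
      of "of_real (norm c)" "sc (u * v) x" "sc (u * v) y" for u]
  have lower: "inverse C1 * norm c * g (u * v) + (- C2 * norm c - C3) \<le> d (sc u (sc c x)) (sc u (sc c y))"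
    and upper: "d (sc u (sc c x)) (sc u (sc c y)) \<le> C1 * norm c * g (u * v) + (C2 * norm c + C3)" for u
    using bounds[of u] by (simp_all add: scale g_def)
  have "inverse C1 * norm c * d\<^sub>0 x y - C2 * norm c - C3
      = (\<integral>u. inverse C1 * norm c * g (u * v) + (- C2 * norm c - C3) \<partial>M)"
    by (simp add: integral_affine g_mult_right prob_space)
  also have "\<dots> \<le> d\<^sub>0 (sc c x) (sc c y)"
    unfolding averaged_dist_eq
    by (intro integral_mono lower) (simp_all add: g_mult_right integrable_dist_scale)
  finally show "inverse C1 * norm c * d\<^sub>0 x y - C2 * norm c - C3 \<le> d\<^sub>0 (sc c x) (sc c y)" .
  have "d\<^sub>0 (sc c x) (sc c y) \<le> (\<integral>u. C1 * norm c * g (u * v) + (C2 * norm c + C3) \<partial>M)"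
    unfolding averaged_dist_eq
    by (intro integral_mono upper) (simp_all add: g_mult_right integrable_dist_scale)
  also have "\<dots> = C1 * norm c * d\<^sub>0 x y + C2 * norm c + C3"
    by (simp add: integral_affine g_mult_right prob_space)
  finally show "d\<^sub>0 (sc c x) (sc c y) \<le> C1 * norm c * d\<^sub>0 x y + C2 * norm c + C3" .
qed

lemma tendsto_dist_scale:
  assumes "(\<lambda>n. d x (Y n)) \<longlonglongrightarrow> 0"
  shows "(\<lambda>n. d (sc u x) (sc u (Y n))) \<longlonglongrightarrow> 0"
proof -
  have "limitin D.mtopology Y x sequentially"
    using assms by (simp add: D.limitin_metric_dist_null D.commute)
  then have "limitin D.mtopology (sc u \<circ> Y) (sc u x) sequentially"
    by (rule continuous_map_limit[OF metric_vector_space_continuous_map_scale[OF metric_vector_space]])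
  then show ?thesis
    by (simp add: D.limitin_metric_dist_null D.commute o_def)
qed

lemma averaged_dist_tendsto_zero:
  assumes "(\<lambda>n. d x (Y n)) \<longlonglongrightarrow> 0"
  shows "(\<lambda>n. d\<^sub>0 x (Y n)) \<longlonglongrightarrow> 0"
proof -
  obtain K where K: "\<And>n. d x (Y n) \<le> K"
    using convergent_imp_Bseq[OF convergentI[OF assms]] by (auto simp: Bseq_def)
  have "(\<lambda>n. \<integral>u. d (sc u x) (sc u (Y n)) \<partial>M) \<longlonglongrightarrow> (\<integral>u. 0 \<partial>M)"
  proof (rule integral_dominated_convergence[where w = "\<lambda>_. \<bar>C1\<bar> * K + (C2 + C3)"])
    show "AE u in M. (\<lambda>n. d (sc u x) (sc u (Y n))) \<longlonglongrightarrow> 0"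
      using assms by (simp add: tendsto_dist_scale)
    have bound: "C1 * d x (Y n) \<le> \<bar>C1\<bar> * K" for n
      by (rule order_trans[OF mult_right_mono[OF abs_ge_self D.nonneg] mult_left_mono[OF K abs_ge_zero]])
    show "AE u in M. norm (d (sc u x) (sc u (Y n))) \<le> \<bar>C1\<bar> * K + (C2 + C3)" for n
    proof (rule AE_I2)
      fix u
      assume "u \<in> space M"
      then show "norm (d (sc u x) (sc u (Y n))) \<le> \<bar>C1\<bar> * K + (C2 + C3)"
        using dist_scale_bounds(2)[OF \<open>u \<in> space M\<close>, of x "Y n"] bound[of n]
        by (simp only: real_norm_def abs_of_nonneg[OF D.nonneg])
    qed
  qed (simp_all add: borel_measurable_dist_scale)
  then show ?thesis
    by (simp add: averaged_dist_eq)
qed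

lemma dist_tendsto_zero_subseq:
  assumes "(\<lambda>n. d\<^sub>0 x (Y n)) \<longlonglongrightarrow> 0"
  shows "\<exists>r. strict_mono r \<and> (\<lambda>n. d x (Y (r n))) \<longlonglongrightarrow> 0"
proof -
  have "norm (d a b) = d a b" for a b
    by (simp add: D.nonneg)
  with assms have "(\<lambda>n. \<integral>u. norm (d (sc u x) (sc u (Y n))) \<partial>M) \<longlonglongrightarrow> 0"
    by (simp only: averaged_dist_eq)
  then obtain r where "strict_mono r"
    and ae: "AE u in M. (\<lambda>n. d (sc u x) (sc u (Y (r n)))) \<longlonglongrightarrow> 0"
    using tendsto_L1_AE_subseq[of M "\<lambda>n u. d (sc u x) (sc u (Y n))", OF integrable_dist_scale]
    by blast
  obtain u where u: "u \<in> space M" and lim: "(\<lambda>n. d (sc u x) (sc u (Y (r n)))) \<longlonglongrightarrow> 0"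
    using AE_imp_ex[OF ae] by blast
  from lim have "(\<lambda>n. d (sc (inverse u) (sc u x)) (sc (inverse u) (sc u (Y (r n))))) \<longlonglongrightarrow> 0"
    by (rule tendsto_dist_scale[of _ "\<lambda>n. sc u (Y (r n))"])
  then have "(\<lambda>n. d x (Y (r n))) \<longlonglongrightarrow> 0"
    by (simp only: left_vector_space_scale_inverse[OF left_vector_space space_nonzero[OF u]])
  with \<open>strict_mono r\<close> show ?thesis
    by (intro exI[of _ r] conjI)
qed

lemma mtopology_averaged_dist: "Metric_space.mtopology UNIV d\<^sub>0 = D.mtopology"
proof -
  have "continuous_map D.mtopology (Metric_space.mtopology UNIV d\<^sub>0) id"
  proof (rule continuous_map_id_mtopology_if_null_subseq[OF D.Metric_space_axioms Metric_space_averaged_dist])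
    fix x Y
    assume "(\<lambda>n. d x (Y n)) \<longlonglongrightarrow> 0"
    then have "(\<lambda>n. d\<^sub>0 x (Y n)) \<longlonglongrightarrow> 0"
      by (rule averaged_dist_tendsto_zero)
    then show "\<exists>r. strict_mono r \<and> (\<lambda>n. d\<^sub>0 x (Y (r n))) \<longlonglongrightarrow> 0"
      by (intro exI[of _ id]) (simp add: strict_mono_id)
  qed
  moreover have "continuous_map (Metric_space.mtopology UNIV d\<^sub>0) D.mtopology id"
    by (rule continuous_map_id_mtopology_if_null_subseq[OF Metric_space_averaged_dist D.Metric_space_axioms
          dist_tendsto_zero_subseq])
  ultimately have "homeomorphic_maps D.mtopology (Metric_space.mtopology UNIV d\<^sub>0) id id"
    by (simp add: homeomorphic_maps_def)
  then have "homeomorphic_map D.mtopology (Metric_space.mtopology UNIV d\<^sub>0) id"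
    using homeomorphic_map_maps by blast
  then show ?thesis
    by (simp only: homeomorphic_map_id)
qed

end

theorem lemma2:
  fixes sc :: "'k::real_normed_div_algebra \<Rightarrow> 'e::ab_group_add \<Rightarrow> 'e"
    and d :: "'e \<Rightarrow> 'e \<Rightarrow> real"
    and M :: "'k measure"
    and C0 C1 C2 C3 :: real
  assumes "metric_vector_space sc d"
    and "right_haar_prob M"
    and "C1 \<ge> 1" and "C2 \<ge> 0" and "C3 \<ge> 0"
    and "translation_invariant C0 d"
    and "lipschitz_multiplicative C1 C2 C3 sc d"
  shows "Metric_space UNIV (averaged_dist M sc d)
    \<and> lipschitz_equivalent C1 (C2 + C3) (averaged_dist M sc d) d
    \<and> translation_invariant C0 (averaged_dist M sc d)
    \<and> lipschitz_multiplicative C1 C2 C3 sc (averaged_dist M sc d)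
    \<and> Metric_space.mtopology UNIV (averaged_dist M sc d) = Metric_space.mtopology UNIV d"
proof -
  interpret sphere_averaging sc d M C1 C2 C3
    using assms(1,2,7) by (rule sphere_averaging.intro)
  show ?thesis
    using Metric_space_averaged_dist lipschitz_equivalent_averaged_dist
      translation_invariant_averaged_dist[OF assms(6)] lipschitz_multiplicative_averaged_dist
      mtopology_averaged_dist
    by (intro conjI)
qed

end
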